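(* For any two groups of agents with additive utilities, with $n=n_1+n_2$ agents in total, there exists an allocation that is EF$(n-1)$ for every agent.
   Context: There is a finite set $G$ of goods and two groups $A_1,A_2$ with $n_1,n_2\ge1$ agents. Each agent has an additive utility $u_a(X)=\sum_{g\in X}u_a(\{g\})\ge0$. An allocation is a partition $(G_1,G_2)$ of $G$; agents of $A_i$ get $u_a(G_i)$. For integer $c\ge0$, the allocation is EF$c$ for $a\in A_i$ if there is $C\subseteq G_{3-i}$ with $|C|\le c$ and $u_a(G_i)\ge u_a(G_{3-i}\setminus C)$. *)

theory Defs
  imports Complex_Main
begin

definition util :: "('a \<Rightarrow> 'g \<Rightarrow> real) \<Rightarrow> 'a \<Rightarrow> 'g set \<Rightarrow> real" where
  "util u a X = (\<Sum>g\<in>X. u a g)"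

definition EFc :: "nat \<Rightarrow> ('a \<Rightarrow> 'g \<Rightarrow> real) \<Rightarrow> 'a \<Rightarrow> 'g set \<Rightarrow> 'g set \<Rightarrow> bool" where
  "EFc c u a Own Other \<longleftrightarrow>
     (\<exists>C. C \<subseteq> Other \<and> card C \<le> c \<and> util u a Own \<ge> util u a (Other - C))"

end

theory Submission imports Defs begin

text \<open>Think of a fractional allocation \<open>x\<close>, where \<open>x g \<in> [0,1]\<close> is the share of good \<open>g\<close>
  given to group 1. Giving everybody half of everything is envy-free, and the envy-freeness
  constraints are \<open>n\<close> linear inequalities, one per agent. If at least \<open>n\<close> goods are split,
  the system in these coordinates is underdetermined, so one can move along a direction that
  keeps every constraint satisfied until one more good becomes integral. Hence some envy-free
  fractional allocation splits fewer than \<open>n\<close> goods; rounding it at \<open>1/2\<close> loses each agent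
  at most the split goods of the other bundle.\<close>

lemma underdetermined_homogeneous_system:
  fixes c :: "'i \<Rightarrow> 'v \<Rightarrow> real"
  assumes "finite I" "finite V" "card I < card V"
  shows "\<exists>y. (\<exists>v\<in>V. y v \<noteq> 0) \<and> (\<forall>i\<in>I. (\<Sum>v\<in>V. c i v * y v) = 0)"
  using assms
proof (induction I arbitrary: V c rule: finite_induct)
  case empty
  then obtain v where "v \<in> V" by fastforce
  then show ?case by (intro exI[of _ "\<lambda>_. 1"]) auto
next
  case (insert i I V c)
  show ?case
  proof (cases "\<forall>v\<in>V. c i v = 0")
    case True
    have "card I < card V" using insert by simp
    with insert.IH[OF insert.prems(1)] obtain y where
      "\<exists>v\<in>V. y v \<noteq> 0" "\<forall>j\<in>I. (\<Sum>v\<in>V. c j v * y v) = 0" by blast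
    with True show ?thesis by (intro exI[of _ y]) auto
  next
    case False
    then obtain v0 where v0: "v0 \<in> V" "c i v0 \<noteq> 0" by blast
    define V' where "V' = V - {v0}"
    \<comment> \<open>Gaussian elimination of the unknown \<open>v0\<close> using equation \<open>i\<close>.\<close>
    define c' where "c' = (\<lambda>j v. c j v - c j v0 * c i v / c i v0)"
    have "finite V'" "card I < card V'" using insert v0 by (auto simp: V'_def)
    with insert.IH obtain y' where
      y': "\<exists>v\<in>V'. y' v \<noteq> 0" "\<forall>j\<in>I. (\<Sum>v\<in>V'. c' j v * y' v) = 0" by blast
    define y where "y = (\<lambda>v. if v = v0 then - (\<Sum>w\<in>V'. c i w * y' w) / c i v0 else y' v)"
    have split: "(\<Sum>v\<in>V. f v * y v) = f v0 * y v0 + (\<Sum>v\<in>V'. f v * y' v)" for f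
    proof -
      have "(\<Sum>v\<in>V. f v * y v) = f v0 * y v0 + (\<Sum>v\<in>V'. f v * y v)"
        using v0 insert.prems(1) by (simp add: V'_def sum.remove)
      also have "(\<Sum>v\<in>V'. f v * y v) = (\<Sum>v\<in>V'. f v * y' v)"
        by (rule sum.cong) (auto simp: y_def V'_def)
      finally show ?thesis .
    qed
    have "(\<Sum>v\<in>V. c i v * y v) = 0"
      using v0 by (simp add: split) (simp add: y_def)
    moreover have "(\<Sum>v\<in>V. c j v * y v) = 0" if "j \<in> I" for j
    proof -
      have "(\<Sum>v\<in>V. c j v * y v) = (\<Sum>v\<in>V'. c' j v * y' v)"
        by (simp add: split) (simp add: y_def c'_def sum_divide_distrib sum_distrib_left
            sum_subtractf algebra_simps)
      with y' that show ?thesis by simp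
    qed
    moreover have "\<exists>v\<in>V. y v \<noteq> 0"
      using y' by (auto simp: y_def V'_def)
    ultimately show ?thesis by blast
  qed
qed

text \<open>The slack unknown \<open>s\<close> turns \<open>card I\<close> inhomogeneous equations in \<open>card F\<close> unknowns
  into a homogeneous system with one more unknown; since all \<open>e i\<close> are nonzero, a nontrivial
  solution cannot vanish on \<open>F\<close>.\<close>

lemma exists_nonzero_solution_with_slack:
  fixes c :: "'i \<Rightarrow> 'v \<Rightarrow> real" and e :: "'i \<Rightarrow> real"
  assumes "finite I" "I \<noteq> {}" "finite F" "card I \<le> card F" "\<forall>i\<in>I. e i \<noteq> 0"
  shows "\<exists>d s. 0 \<le> s \<and> (\<exists>f\<in>F. d f \<noteq> 0) \<and> (\<forall>i\<in>I. (\<Sum>f\<in>F. c i f * d f) = e i * s)"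
proof -
  define V where "V = insert None (Some ` F)"
  define c' where "c' = (\<lambda>i v. case v of None \<Rightarrow> - e i | Some f \<Rightarrow> c i f)"
  have "card V = card F + 1"
    using assms(3) by (simp add: V_def card_image)
  with assms obtain y where y: "\<exists>v\<in>V. y v \<noteq> 0" "\<forall>i\<in>I. (\<Sum>v\<in>V. c' i v * y v) = 0"
    using underdetermined_homogeneous_system[of I V c'] by (auto simp: V_def)
  have sum_V: "(\<Sum>v\<in>V. c' i v * z v) = (\<Sum>f\<in>F. c i f * z (Some f)) - e i * z None"
    for i and z :: "'v option \<Rightarrow> real"
    using assms(3) by (simp add: V_def c'_def sum.reindex)
  define \<sigma> where "\<sigma> = (if 0 \<le> y None then 1 else - 1 :: real)"
  define d where "d = (\<lambda>f. \<sigma> * y (Some f))"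
  have eq: "(\<Sum>f\<in>F. c i f * d f) = e i * (\<sigma> * y None)" if "i \<in> I" for i
  proof -
    have "(\<Sum>f\<in>F. c i f * y (Some f)) = e i * y None"
      using y(2) that sum_V[of i y] by simp
    then show ?thesis
      by (simp add: d_def sum_distrib_left[symmetric] algebra_simps)
  qed
  have "\<exists>f\<in>F. d f \<noteq> 0"
  proof (rule ccontr)
    assume "\<not> ?thesis"
    then have zero: "\<forall>f\<in>F. y (Some f) = 0" by (simp add: d_def \<sigma>_def split: if_splits)
    obtain i where "i \<in> I" using assms(2) by blast
    with y(2) sum_V[of i y] zero assms(5) have "y None = 0" by simp
    with zero y(1) show False by (auto simp: V_def)
  qed
  moreover have "0 \<le> \<sigma> * y None" by (simp add: \<sigma>_def)
  ultimately show ?thesis using eq by blast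
qed

lemma step_to_boundary:
  fixes x d :: "'g \<Rightarrow> real"
  assumes "finite F" "\<forall>f\<in>F. 0 < x f \<and> x f < 1" "\<exists>f\<in>F. d f \<noteq> 0"
  shows "\<exists>t>0. (\<forall>f\<in>F. 0 \<le> x f + t * d f \<and> x f + t * d f \<le> 1) \<and>
           (\<exists>f\<in>F. x f + t * d f \<in> {0, 1})"
proof -
  define B where "B = {f\<in>F. d f \<noteq> 0}"
  \<comment> \<open>the step length after which coordinate \<open>f\<close> leaves \<open>[0,1]\<close>\<close>
  define b where "b = (\<lambda>f. if 0 < d f then (1 - x f) / d f else - x f / d f)"
  define t where "t = Min (b ` B)"
  have B: "finite B" "B \<noteq> {}" using assms(1,3) by (auto simp: B_def)
  then have "t \<in> b ` B" by (simp add: t_def)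
  then obtain f0 where f0: "f0 \<in> B" "b f0 = t" by blast
  have b_pos: "0 < b f" if "f \<in> B" for f
    using that assms(2) by (auto simp: B_def b_def divide_pos_neg)
  have t_le: "t \<le> b f" if "f \<in> B" for f using B that by (simp add: t_def)
  have "0 < t" using f0 b_pos by force
  moreover have "0 \<le> x f + t * d f \<and> x f + t * d f \<le> 1" if "f \<in> F" for f
  proof (cases "d f = 0")
    case True
    then show ?thesis using that assms(2) by auto
  next
    case False
    then have "f \<in> B" using that by (simp add: B_def)
    then have "t \<le> b f" by (rule t_le)
    have "0 < x f" "x f < 1" using that assms(2) by auto
    show ?thesis
    proof (cases "0 < d f")
      case True
      then have "t * d f \<le> 1 - x f" using \<open>t \<le> b f\<close> by (simp add: b_def pos_le_divide_eq)
      moreover have "0 \<le> t * d f" using True \<open>0 < t\<close> by simp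
      ultimately show ?thesis using \<open>0 < x f\<close> by linarith
    next
      case False
      then have neg: "d f < 0" using \<open>d f \<noteq> 0\<close> by simp
      have "- x f / d f * d f \<le> t * d f"
        using \<open>t \<le> b f\<close> neg False by (intro mult_right_mono_neg) (auto simp: b_def)
      then have "- x f \<le> t * d f" using neg by simp
      moreover have "t * d f \<le> 0" using neg \<open>0 < t\<close> by (simp add: mult_pos_neg less_imp_le)
      ultimately show ?thesis using \<open>x f < 1\<close> by linarith
    qed
  qed
  moreover have "x f0 + t * d f0 \<in> {0, 1}"
    using f0 by (auto simp: B_def b_def)
  ultimately show ?thesis using f0(1) by (auto simp: B_def)
qed

definition fractional_goods :: "'g set \<Rightarrow> ('g \<Rightarrow> real) \<Rightarrow> 'g set" where
  "fractional_goods G x = {g\<in>G. 0 < x g \<and> x g < 1}"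

text \<open>\<open>x g\<close> is the share of \<open>g\<close> given to group 1; the sum \<open>\<Sum>g\<in>G. u a g * (2 * x g - 1)\<close>
  is the value agent \<open>a\<close> assigns to the share of group 1 minus that of group 2.\<close>

definition fractional_envy_free ::
    "'g set \<Rightarrow> 'a set \<Rightarrow> 'a set \<Rightarrow> ('a \<Rightarrow> 'g \<Rightarrow> real) \<Rightarrow> ('g \<Rightarrow> real) \<Rightarrow> bool" where
  "fractional_envy_free G A1 A2 u x \<longleftrightarrow> (\<forall>g\<in>G. 0 \<le> x g \<and> x g \<le> 1) \<and>
     (\<forall>a\<in>A1. 0 \<le> (\<Sum>g\<in>G. u a g * (2 * x g - 1))) \<and>
     (\<forall>a\<in>A2. (\<Sum>g\<in>G. u a g * (2 * x g - 1)) \<le> 0)"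

lemma sum_share_difference_shift:
  fixes u x d :: "'g \<Rightarrow> real"
  assumes "finite G" "F \<subseteq> G"
  shows "(\<Sum>g\<in>G. u g * (2 * (if g \<in> F then x g + t * d g else x g) - 1)) =
         (\<Sum>g\<in>G. u g * (2 * x g - 1)) + 2 * t * (\<Sum>f\<in>F. u f * d f)"
proof -
  have "(\<Sum>g\<in>G. u g * (2 * (if g \<in> F then x g + t * d g else x g) - 1)) =
        (\<Sum>g\<in>G. u g * (2 * x g - 1) + 2 * t * (if g \<in> F then u g * d g else 0))"
    by (rule sum.cong) (auto simp: algebra_simps)
  also have "\<dots> = (\<Sum>g\<in>G. u g * (2 * x g - 1)) + 2 * t * (\<Sum>g\<in>G. if g \<in> F then u g * d g else 0)"
    by (simp add: sum.distrib sum_distrib_left)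
  also have "(\<Sum>g\<in>G. if g \<in> F then u g * d g else 0) = (\<Sum>f\<in>F. u f * d f)"
    using assms by (simp add: sum.inter_restrict[symmetric] Int_absorb1)
  finally show ?thesis .
qed

lemma fractional_envy_free_fewer_fractional_goods:
  assumes "finite G" "finite A1" "finite A2" "A1 \<inter> A2 = {}" "A1 \<union> A2 \<noteq> {}"
    and x: "fractional_envy_free G A1 A2 u x"
    and many: "card (A1 \<union> A2) \<le> card (fractional_goods G x)"
  shows "\<exists>x'. fractional_envy_free G A1 A2 u x' \<and>
           card (fractional_goods G x') < card (fractional_goods G x)"
proof -
  define F where "F = fractional_goods G x"
  have F: "finite F" "F \<subseteq> G" "\<forall>f\<in>F. 0 < x f \<and> x f < 1"
    using assms(1) by (auto simp: F_def fractional_goods_def)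
  define e where "e = (\<lambda>a. if a \<in> A1 then 1 else - 1 :: real)"
  have "finite (A1 \<union> A2)" "card (A1 \<union> A2) \<le> card F" "\<forall>a\<in>A1 \<union> A2. e a \<noteq> 0"
    using assms(2,3) many by (auto simp: F_def e_def)
  then obtain d s where ds: "0 \<le> s" "\<exists>f\<in>F. d f \<noteq> 0"
      "\<forall>a\<in>A1 \<union> A2. (\<Sum>f\<in>F. u a f * d f) = e a * s"
    using exists_nonzero_solution_with_slack[of "A1 \<union> A2" F e u] assms(5) F(1) by blast
  obtain t where t: "0 < t" "\<forall>f\<in>F. 0 \<le> x f + t * d f \<and> x f + t * d f \<le> 1"
      "\<exists>f\<in>F. x f + t * d f \<in> {0, 1}"
    using step_to_boundary[OF F(1,3) ds(2)] by blast
  define x' where "x' = (\<lambda>g. if g \<in> F then x g + t * d g else x g)"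
  have shift: "(\<Sum>g\<in>G. u a g * (2 * x' g - 1)) = (\<Sum>g\<in>G. u a g * (2 * x g - 1)) + 2 * t * e a * s"
    if "a \<in> A1 \<union> A2" for a
    using sum_share_difference_shift[OF assms(1) F(2), of "u a" x t d] ds(3) that
    by (simp add: x'_def)
  have "\<forall>g\<in>G. 0 \<le> x' g \<and> x' g \<le> 1"
    using t(2) x by (auto simp: x'_def fractional_envy_free_def)
  moreover have "0 \<le> 2 * t * s" using t(1) ds(1) by simp
  then have "0 \<le> (\<Sum>g\<in>G. u a g * (2 * x' g - 1))" if "a \<in> A1" for a
    using that shift[of a] x by (simp add: e_def fractional_envy_free_def)
  moreover have "(\<Sum>g\<in>G. u a g * (2 * x' g - 1)) \<le> 0" if "a \<in> A2" for a
  proof -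
    have "a \<notin> A1" using that assms(4) by blast
    then have "(\<Sum>g\<in>G. u a g * (2 * x' g - 1)) = (\<Sum>g\<in>G. u a g * (2 * x g - 1)) - 2 * t * s"
      using that shift[of a] by (simp add: e_def)
    moreover have "(\<Sum>g\<in>G. u a g * (2 * x g - 1)) \<le> 0"
      using that x by (simp add: fractional_envy_free_def)
    ultimately show ?thesis using \<open>0 \<le> 2 * t * s\<close> by linarith
  qed
  ultimately have "fractional_envy_free G A1 A2 u x'"
    by (simp add: fractional_envy_free_def)
  moreover have "fractional_goods G x' \<subset> F"
  proof -
    obtain f0 where "f0 \<in> F" "x' f0 \<in> {0, 1}" using t(3) by (auto simp: x'_def)
    moreover have "fractional_goods G x' \<subseteq> F"
      by (auto simp: fractional_goods_def x'_def F_def)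
    ultimately show ?thesis by (auto simp: fractional_goods_def)
  qed
  then have "card (fractional_goods G x') < card F"
    using F(1) by (rule psubset_card_mono[rotated])
  ultimately show ?thesis by (auto simp: F_def)
qed

lemma exists_fractional_envy_free_few_fractional_goods:
  assumes "finite G" "finite A1" "finite A2" "A1 \<inter> A2 = {}" "A1 \<union> A2 \<noteq> {}"
  shows "\<exists>x. fractional_envy_free G A1 A2 u x \<and> card (fractional_goods G x) < card (A1 \<union> A2)"
proof -
  have "fractional_envy_free G A1 A2 u (\<lambda>_. 1/2)"
    by (simp add: fractional_envy_free_def)
  then obtain x where x: "fractional_envy_free G A1 A2 u x"
    and least: "\<And>y. fractional_envy_free G A1 A2 u y \<Longrightarrow>
                  card (fractional_goods G x) \<le> card (fractional_goods G y)"
    using ex_has_least_nat[of "fractional_envy_free G A1 A2 u" _ "\<lambda>y. card (fractional_goods G y)"]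
    by blast
  have "card (fractional_goods G x) < card (A1 \<union> A2)"
  proof (rule ccontr)
    assume "\<not> ?thesis"
    then show False
      using fractional_envy_free_fewer_fractional_goods[OF assms x] least leD by fastforce
  qed
  with x show ?thesis by blast
qed

lemma EFc_mono: "c \<le> c' \<Longrightarrow> EFc c u a Own Other \<Longrightarrow> EFc c' u a Own Other"
  unfolding EFc_def by (meson order_trans)

text \<open>The removed goods are those of the other bundle in which the agent's group held a
  share, which is at most \<open>1/2\<close>; the rest of that bundle it did not hold at all.\<close>

lemma EFc_of_rounded_share:
  fixes y :: "'g \<Rightarrow> real"
  assumes "finite G" "Own \<union> Other = G" "Own \<inter> Other = {}"
    and u: "\<forall>g\<in>G. 0 \<le> u a g" and y: "\<forall>g\<in>G. 0 \<le> y g \<and> y g \<le> 1" "\<forall>g\<in>Other. y g \<le> 1/2"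
    and envy_free: "0 \<le> (\<Sum>g\<in>G. u a g * (2 * y g - 1))"
  shows "EFc (card {g\<in>Other. 0 < y g}) u a Own Other"
proof -
  define C where "C = {g\<in>Other. 0 < y g}"
  define D where "D = {g\<in>Other. y g = 0}"
  let ?f = "\<lambda>g. u a g * (2 * y g - 1)"
  have fin: "finite Own" "finite C" "finite D" using assms(1,2) by (auto simp: C_def D_def)
  have D: "Other - C = D" "Other = C \<union> D" "C \<inter> D = {}"
    using y assms(2) by (force simp: C_def D_def)+
  have "(\<Sum>g\<in>G. ?f g) = sum ?f Own + sum ?f Other"
    using assms(2,3) fin D(2) by (simp add: sum.union_disjoint[symmetric])
  also have "sum ?f Other = sum ?f C + sum ?f D"
    using fin D(2,3) by (simp add: sum.union_disjoint)
  finally have "(\<Sum>g\<in>G. ?f g) = sum ?f Own + sum ?f C + sum ?f D" by simp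
  moreover have "sum ?f Own \<le> sum (u a) Own"
    using u y(1) assms(2) by (intro sum_mono) (auto simp: mult_left_le)
  moreover have "sum ?f C \<le> 0"
    using u y assms(2) by (intro sum_nonpos) (auto simp: C_def mult_nonneg_nonpos)
  moreover have "sum ?f D = - sum (u a) D"
    by (simp add: D_def sum_negf[symmetric])
  ultimately have "sum (u a) D \<le> sum (u a) Own"
    using envy_free by linarith
  then show ?thesis
    unfolding EFc_def util_def using D(1) by (auto simp: C_def)
qed

theorem mainTheorem13:
  fixes G :: "'g set" and A1 A2 :: "'a set" and u :: "'a \<Rightarrow> 'g \<Rightarrow> real"
  assumes "finite G"
    and "finite A1" and "finite A2" and "A1 \<inter> A2 = {}"
    and "card A1 \<ge> 1" and "card A2 \<ge> 1"
    and "\<And>a g. a \<in> A1 \<union> A2 \<Longrightarrow> g \<in> G \<Longrightarrow> u a g \<ge> 0"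
  shows "\<exists>G1 G2. G1 \<union> G2 = G \<and> G1 \<inter> G2 = {} \<and>
           (\<forall>a\<in>A1. EFc (card A1 + card A2 - 1) u a G1 G2) \<and>
           (\<forall>a\<in>A2. EFc (card A1 + card A2 - 1) u a G2 G1)"
proof -
  have "card (A1 \<union> A2) = card A1 + card A2" "A1 \<union> A2 \<noteq> {}"
    using assms(2-5) by (auto simp: card_Un_disjoint)
  with assms(1-4) obtain x where x: "fractional_envy_free G A1 A2 u x"
    and few: "card (fractional_goods G x) \<le> card A1 + card A2 - 1"
    using exists_fractional_envy_free_few_fractional_goods[of G A1 A2 u] by fastforce
  define G1 where "G1 = {g\<in>G. 1/2 \<le> x g}"
  define G2 where "G2 = {g\<in>G. x g < 1/2}"
  have partition: "G1 \<union> G2 = G" "G2 \<union> G1 = G" "G1 \<inter> G2 = {}" "G2 \<inter> G1 = {}"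
    by (auto simp: G1_def G2_def)
  have split_goods: "card S \<le> card A1 + card A2 - 1" if "S \<subseteq> fractional_goods G x" for S
    using card_mono[OF _ that] assms(1) few by (simp add: fractional_goods_def)
  have "EFc (card A1 + card A2 - 1) u a G1 G2" if "a \<in> A1" for a
    using EFc_of_rounded_share[OF assms(1) partition(1,3), of u a x] that x assms(7)
    by (intro EFc_mono[OF split_goods])
       (auto simp: G1_def G2_def fractional_goods_def fractional_envy_free_def)
  moreover have "EFc (card A1 + card A2 - 1) u a G2 G1" if "a \<in> A2" for a
  proof -
    have "(\<Sum>g\<in>G. u a g * (2 * (1 - x g) - 1)) = - (\<Sum>g\<in>G. u a g * (2 * x g - 1))"
      by (simp add: sum_negf[symmetric] algebra_simps)
    then show ?thesis
      using EFc_of_rounded_share[OF assms(1) partition(2,4), of u a "\<lambda>g. 1 - x g"] that x assms(7)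
      by (intro EFc_mono[OF split_goods])
         (auto simp: G1_def G2_def fractional_goods_def fractional_envy_free_def)
  qed
  ultimately show ?thesis using partition by blast
qed

end
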